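(* For every integer $m\ge 3$, $M(3,m)=2(m-1)$.
   Context: All graphs are finite and simple. A path $v_1,\ldots,v_r$ in a graph $G$ is degree-monotone if $\deg_G(v_1)\le\cdots\le\deg_G(v_r)$; its order is $r$. Let $mp(G)$ be the maximum order of a degree-monotone path in $G$. For a $2$-edge-coloring of $K_n$ with colors $1,2$, let $G_j$ be the spanning subgraph consisting of the edges colored $j$ (degrees taken in $G_j$). $M(m_1,m_2)$ is the minimum integer $M$ such that for every $n\ge M$ and every $2$-edge-coloring of $K_n$, either $mp(G_1)\ge m_1$ or $mp(G_2)\ge m_2$. *)

theory Defs
  imports Main
begin

text \<open>A graph on the finite vertex set V is given by an edge predicate E
  (assumed symmetric and irreflexive where used).\<close>

definition deg :: "'a set \<Rightarrow> ('a \<Rightarrow> 'a \<Rightarrow> bool) \<Rightarrow> 'a \<Rightarrow> nat" where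
  "deg V E v = card {w \<in> V. E v w}"

definition dm_path :: "'a set \<Rightarrow> ('a \<Rightarrow> 'a \<Rightarrow> bool) \<Rightarrow> 'a list \<Rightarrow> bool" where
  "dm_path V E p \<longleftrightarrow> p \<noteq> [] \<and> distinct p \<and> set p \<subseteq> V \<and>
     (\<forall>i. Suc i < length p \<longrightarrow> E (p ! i) (p ! Suc i) \<and>
        deg V E (p ! i) \<le> deg V E (p ! Suc i))"

definition mp :: "'a set \<Rightarrow> ('a \<Rightarrow> 'a \<Rightarrow> bool) \<Rightarrow> nat" where
  "mp V E = Max (insert 0 {length p | p. dm_path V E p})"

definition two_colouring :: "nat \<Rightarrow> (nat set \<Rightarrow> nat) \<Rightarrow> bool" where
  "two_colouring n col \<longleftrightarrow> (\<forall>e. e \<subseteq> {..<n} \<and> card e = 2 \<longrightarrow> col e \<in> {1, 2})"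

definition colour_graph :: "(nat set \<Rightarrow> nat) \<Rightarrow> nat \<Rightarrow> nat \<Rightarrow> nat \<Rightarrow> bool" where
  "colour_graph col j u v \<longleftrightarrow> u \<noteq> v \<and> col {u, v} = j"

definition arrows :: "nat \<Rightarrow> nat \<Rightarrow> nat \<Rightarrow> bool" where
  "arrows m1 m2 M \<longleftrightarrow> (\<forall>n \<ge> M. \<forall>col. two_colouring n col \<longrightarrow>
      mp {..<n} (colour_graph col 1) \<ge> m1 \<or> mp {..<n} (colour_graph col 2) \<ge> m2)"

definition M_num :: "nat \<Rightarrow> nat \<Rightarrow> nat" where
  "M_num m1 m2 = (LEAST M. arrows m1 m2 M)"

end

theory Submission
  imports Defs Complex_Main
begin

text \<open>Lower bound: on 2m - 3 vertices, let colour 1 be the complete bipartite graph with sides of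
  sizes m - 1 and m - 2. Its two sides have different degrees, so a colour-1 path of order three,
  which alternates sides, cannot be degree-monotone; colour 2 consists of two cliques of orders
  m - 1 and m - 2.

  Upper bound: suppose colour 1 has no degree-monotone path of order three. Then a vertex with a
  neighbour of larger degree sees only vertices of larger degree, and symmetrically; the remaining
  vertices span a matching. The first kind of vertices together with one end of each matching edge
  form an independent set of colour 1, i.e. a colour-2 clique, which is a degree-monotone path once
  sorted by degree. Double counting with weights 1/deg shows that this clique contains at least
  half of the vertices, and exactly half only if colour 1 is a perfect matching; then colour 2 is
  regular and the clique extends by one more vertex.\<close>

section \<open>Degree-monotone paths\<close>

lemma dm_pathI:
  assumes "p \<noteq> []" "distinct p" "set p \<subseteq> V"
    "\<And>i. Suc i < length p \<Longrightarrow> E (p ! i) (p ! Suc i)" "sorted (map (deg V E) p)"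
  shows "dm_path V E p"
  using assms unfolding dm_path_def by (auto simp: sorted_iff_nth_Suc)

lemma dm_path_length: "dm_path V E p \<Longrightarrow> length p = card (set p)"
  unfolding dm_path_def by (simp add: distinct_card)

lemma dm_path_length_le_card:
  assumes "finite V" "dm_path V E p"
  shows "length p \<le> card V"
proof -
  have "length p = card (set p)" using assms(2) by (rule dm_path_length)
  also have "\<dots> \<le> card V" using assms by (intro card_mono) (auto simp: dm_path_def)
  finally show ?thesis .
qed

lemma finite_dm_path_lengths:
  assumes "finite V"
  shows "finite (insert 0 {length p | p. dm_path V E p})"
proof -
  have "{length p | p. dm_path V E p} \<subseteq> {..card V}"
    using dm_path_length_le_card[OF assms] by auto
  thus ?thesis using finite_subset by blast
qed

lemma dm_path_length_le_mp:
  assumes "finite V" "dm_path V E p"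
  shows "length p \<le> mp V E"
  unfolding mp_def using assms by (intro Max_ge[OF finite_dm_path_lengths]) auto

lemma mp_le:
  assumes "finite V" "\<And>p. dm_path V E p \<Longrightarrow> length p \<le> k"
  shows "mp V E \<le> k"
  unfolding mp_def using assms by (subst Max_le_iff[OF finite_dm_path_lengths]) auto

lemma dm_path_snoc:
  assumes "dm_path V E p" "b \<in> V" "b \<notin> set p" "E (last p) b" "deg V E (last p) \<le> deg V E b"
  shows "dm_path V E (p @ [b])"
proof -
  have p: "p \<noteq> []" "distinct p" "set p \<subseteq> V"
    and step: "\<And>i. Suc i < length p \<Longrightarrow>
                 E (p ! i) (p ! Suc i) \<and> deg V E (p ! i) \<le> deg V E (p ! Suc i)"
    using assms(1) unfolding dm_path_def by auto
  have last: "p ! (length p - 1) = last p" using p(1) by (simp add: last_conv_nth)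
  show ?thesis
    unfolding dm_path_def
  proof (intro conjI allI impI)
    fix i assume i: "Suc i < length (p @ [b])"
    have "E ((p @ [b]) ! i) ((p @ [b]) ! Suc i) \<and>
          deg V E ((p @ [b]) ! i) \<le> deg V E ((p @ [b]) ! Suc i)"
    proof (cases "Suc i < length p")
      case True
      thus ?thesis using step by (simp add: nth_append)
    next
      case False
      hence "i = length p - 1" "Suc i = length p" using i p(1) by auto
      thus ?thesis using assms(4,5) last by (simp add: nth_append)
    qed
    thus "E ((p @ [b]) ! i) ((p @ [b]) ! Suc i)"
      "deg V E ((p @ [b]) ! i) \<le> deg V E ((p @ [b]) ! Suc i)" by auto
  qed (use p assms(2,3) in auto)
qed

lemma clique_dm_path:
  assumes "finite X" "X \<subseteq> V" "X \<noteq> {}" "\<And>x y. x \<in> X \<Longrightarrow> y \<in> X \<Longrightarrow> x \<noteq> y \<Longrightarrow> E x y"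
  shows "\<exists>p. dm_path V E p \<and> set p = X"
proof -
  obtain xs where xs: "set xs = X" "distinct xs" using finite_distinct_list[OF assms(1)] by blast
  define p where "p = sort_key (deg V E) xs"
  have set_p: "set p = X" and distinct_p: "distinct p" using xs by (simp_all add: p_def)
  have "dm_path V E p"
  proof (rule dm_pathI)
    show "p \<noteq> []" "set p \<subseteq> V" using set_p assms(2,3) by auto
    show "sorted (map (deg V E) p)" by (simp add: p_def)
    fix i assume i: "Suc i < length p"
    have "p ! i \<in> X" "p ! Suc i \<in> X" using i set_p nth_mem[of i p] nth_mem[of "Suc i" p] by auto
    moreover have "p ! i \<noteq> p ! Suc i" using distinct_p i by (simp add: nth_eq_iff_index_eq)
    ultimately show "E (p ! i) (p ! Suc i)" using assms(4) by blast
  qed (fact distinct_p)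
  thus ?thesis using set_p by blast
qed

lemma dm_path_preserves:
  assumes "dm_path V E p" "\<And>u v. E u v \<Longrightarrow> P u \<longleftrightarrow> P v" "x \<in> set p"
  shows "P x \<longleftrightarrow> P (hd p)"
proof -
  have "P (p ! i) \<longleftrightarrow> P (p ! 0)" if "i < length p" for i
    using that
  proof (induction i)
    case (Suc i)
    hence "E (p ! i) (p ! Suc i)" using assms(1) unfolding dm_path_def by blast
    thus ?case using Suc assms(2) by auto
  qed simp
  moreover obtain i where "i < length p" "x = p ! i" using assms(3) by (auto simp: in_set_conv_nth)
  ultimately show ?thesis by (metis hd_conv_nth length_0_conv less_nat_zero_code)
qed

definition independent_in :: "('a \<Rightarrow> 'a \<Rightarrow> bool) \<Rightarrow> 'a set \<Rightarrow> bool" where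
  "independent_in E X \<longleftrightarrow> (\<forall>x \<in> X. \<forall>y \<in> X. \<not> E x y)"

definition complementary :: "'a set \<Rightarrow> ('a \<Rightarrow> 'a \<Rightarrow> bool) \<Rightarrow> ('a \<Rightarrow> 'a \<Rightarrow> bool) \<Rightarrow> bool" where
  "complementary V E E' \<longleftrightarrow> (\<forall>u \<in> V. \<forall>v \<in> V. E' u v \<longleftrightarrow> u \<noteq> v \<and> \<not> E u v)"

lemma deg_complementary:
  assumes "complementary V E E'" "finite V" "v \<in> V" "\<not> E v v"
  shows "deg V E' v = card V - 1 - deg V E v"
proof -
  have "{w \<in> V. E' v w} = (V - {v}) - {w \<in> V. E v w}"
    using assms(1,3) unfolding complementary_def by auto
  moreover have "{w \<in> V. E v w} \<subseteq> V - {v}" using assms(4) by auto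
  ultimately show ?thesis
    using assms(2,3) by (simp add: deg_def card_Diff_subset)
qed

lemma independent_dm_path_complementary:
  assumes "complementary V E E'" "finite V" "X \<subseteq> V" "X \<noteq> {}" "independent_in E X"
  shows "\<exists>p. dm_path V E' p \<and> set p = X"
proof (rule clique_dm_path)
  show "finite X" using finite_subset[OF assms(3,2)] .
  fix x y assume "x \<in> X" "y \<in> X" "x \<noteq> y"
  thus "E' x y" using assms(1,3,5) unfolding complementary_def independent_in_def by blast
qed (use assms in auto)

text \<open>The complement of a perfect matching is regular, so a clique in it can be extended
  by any further vertex adjacent to its last one.\<close>

lemma perfect_matching_complementary_dm_path:
  assumes "complementary V E E'" "finite V" "\<And>v. \<not> E v v"
    and matching: "\<forall>v \<in> V. deg V E v = 1"
    and "X \<subseteq> V" "X \<noteq> {}" "independent_in E X" "2 \<le> card (V - X)"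
  shows "\<exists>p. dm_path V E' p \<and> length p = card X + 1"
proof -
  obtain p where p: "dm_path V E' p" "set p = X"
    using independent_dm_path_complementary[OF assms(1,2,5-7)] by blast
  have last_X: "last p \<in> X" using p assms(6) by (metis last_in_set dm_path_def)
  hence last_V: "last p \<in> V" using assms(5) by blast
  then obtain w where w: "{u \<in> V. E (last p) u} = {w}"
    using matching by (auto simp: deg_def card_1_singleton_iff)
  obtain b where b: "b \<in> V - X" "b \<noteq> w"
  proof -
    have "card (V - X) - 1 \<le> card (V - X - {w})"
      using diff_card_le_card_Diff[of "{w}" "V - X"] by simp
    hence "V - X - {w} \<noteq> {}" using assms(8) by (intro notI) simp
    thus ?thesis using that by blast
  qed
  have "\<not> E (last p) b" using w b by blast
  moreover have "last p \<noteq> b" using last_X b by blast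
  ultimately have "E' (last p) b"
    using assms(1) b(1) last_V unfolding complementary_def by blast
  moreover have "deg V E' (last p) = deg V E' b"
    using deg_complementary[OF assms(1,2)] assms(3) matching b last_V by simp
  ultimately have "dm_path V E' (p @ [b])"
    using b p by (intro dm_path_snoc) auto
  moreover have "length p = card X" using dm_path_length[OF p(1)] p(2) by simp
  ultimately show ?thesis by (intro exI[of _ "p @ [b]"]) simp
qed

section \<open>Graphs without degree-monotone paths of order three\<close>

locale dm3_free_graph =
  fixes V :: "'a::linorder set" and E :: "'a \<Rightarrow> 'a \<Rightarrow> bool"
  assumes finite_V: "finite V"
    and sym: "E u v \<Longrightarrow> E v u"
    and irrefl: "\<not> E v v"
    and mp_less_3: "mp V E < 3"
begin

abbreviation d :: "'a \<Rightarrow> nat" where "d \<equiv> deg V E"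

abbreviation nbrs :: "'a \<Rightarrow> 'a set" where "nbrs v \<equiv> {w \<in> V. E v w}"

lemma finite_nbrs: "finite (nbrs v)"
  using finite_V by simp

lemma no_monotone_triple:
  assumes "a \<in> V" "b \<in> V" "c \<in> V" "E a b" "E b c" "a \<noteq> c" "d a \<le> d b" "d b \<le> d c"
  shows False
proof -
  have "dm_path V E [a, b, c]"
  proof (rule dm_pathI)
    show "distinct [a, b, c]" using assms(4-6) irrefl by auto
    fix i assume "Suc i < length [a, b, c]"
    hence "i = 0 \<or> i = 1" by auto
    thus "E ([a, b, c] ! i) ([a, b, c] ! Suc i)" using assms(4,5) by auto
  qed (use assms in auto)
  hence "3 \<le> mp V E" using dm_path_length_le_mp[OF finite_V] by fastforce
  thus False using mp_less_3 by simp
qed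

text \<open>Level vertices turn out to span a matching, and
  we split them into the smaller and the larger ends of its edges (isolated vertices count as
  smaller ends).\<close>

definition low :: "'a set" where
  "low = {v \<in> V. \<exists>u \<in> V. E v u \<and> d v < d u}"

definition high :: "'a set" where
  "high = {v \<in> V. \<exists>u \<in> V. E v u \<and> d u < d v}"

definition level :: "'a set" where
  "level = V - low - high"

definition level_min :: "'a set" where
  "level_min = {v \<in> level. \<forall>u \<in> V. E v u \<longrightarrow> v < u}"

definition level_max :: "'a set" where
  "level_max = level - level_min"

lemma low_nbr:
  assumes "v \<in> low" "u \<in> V" "E v u"
  shows "d v < d u \<and> u \<in> high"
proof -
  obtain w where w: "w \<in> V" "E v w" "d v < d w" using assms(1) unfolding low_def by auto
  have "v \<in> V" using assms(1) unfolding low_def by auto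
  have "d v < d u"
  proof (rule ccontr)
    assume "\<not> d v < d u"
    thus False using no_monotone_triple[of u v w] assms w \<open>v \<in> V\<close> sym by fastforce
  qed
  thus ?thesis using assms(2,3) \<open>v \<in> V\<close> sym unfolding high_def by auto
qed

lemma high_nbr:
  assumes "v \<in> high" "u \<in> V" "E v u"
  shows "d u < d v \<and> u \<in> low"
proof -
  obtain w where w: "w \<in> V" "E v w" "d w < d v" using assms(1) unfolding high_def by auto
  have "v \<in> V" using assms(1) unfolding high_def by auto
  have "d u < d v"
  proof (rule ccontr)
    assume "\<not> d u < d v"
    thus False using no_monotone_triple[of w v u] assms w \<open>v \<in> V\<close> sym by fastforce
  qed
  thus ?thesis using assms(2,3) \<open>v \<in> V\<close> sym unfolding low_def by auto
qed

lemma low_high_disjoint: "low \<inter> high = {}"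
proof -
  have False if low: "v \<in> low" and high: "v \<in> high" for v
  proof -
    obtain u where "u \<in> V" "E v u" "d u < d v" using high unfolding high_def by auto
    thus False using low_nbr[OF low] by fastforce
  qed
  thus ?thesis by blast
qed

lemma level_nbr:
  assumes "v \<in> level" "u \<in> V" "E v u"
  shows "nbrs u = {v} \<and> u \<in> level"
proof -
  have "v \<in> V" using assms(1) unfolding level_def by auto
  have level_deg: "d w = d v" if "w \<in> V" "E v w" for w
    using assms(1) that unfolding level_def low_def high_def by force
  have "w = v" if "w \<in> V" "E u w" for w
  proof (rule ccontr)
    assume "w \<noteq> v"
    show False
    proof (cases "d u \<le> d w")
      case True
      thus False using no_monotone_triple[of v u w] \<open>w \<noteq> v\<close> \<open>v \<in> V\<close> assms that level_deg by auto
    next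
      case False
      thus False
        using no_monotone_triple[of w u v] \<open>w \<noteq> v\<close> \<open>v \<in> V\<close> assms that level_deg sym by auto
    qed
  qed
  hence nbrs_u: "nbrs u = {v}" using \<open>v \<in> V\<close> sym[OF assms(3)] by blast
  hence "u \<notin> low" "u \<notin> high" using level_deg[OF assms(2,3)] unfolding low_def high_def by auto
  thus ?thesis using nbrs_u assms(2) unfolding level_def by auto
qed

lemma independent_low_level_min: "independent_in E (low \<union> level_min)"
  unfolding independent_in_def
proof (intro ballI notI)
  fix x y assume x: "x \<in> low \<union> level_min" and y: "y \<in> low \<union> level_min" and "E x y"
  have "low \<union> level_min \<subseteq> V" unfolding low_def level_min_def level_def by auto
  hence "x \<in> V" "y \<in> V" using x y by auto
  have level_min_not_high: "level_min \<inter> high = {}" "level_min \<inter> low = {}"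
    unfolding level_min_def level_def by auto
  show False
  proof (cases "x \<in> low")
    case True
    thus False using low_nbr[of x y] \<open>E x y\<close> \<open>y \<in> V\<close> y low_high_disjoint level_min_not_high
      by blast
  next
    case False
    hence "x \<in> level_min" using x by blast
    show False
    proof (cases "y \<in> low")
      case True
      thus False using low_nbr[of y x] \<open>E x y\<close> \<open>x \<in> V\<close> sym \<open>x \<in> level_min\<close> level_min_not_high
        by blast
    next
      case False
      hence "y \<in> level_min" using y by blast
      thus False using \<open>x \<in> level_min\<close> \<open>E x y\<close> \<open>x \<in> V\<close> \<open>y \<in> V\<close> sym
        unfolding level_min_def by force
    qed
  qed
qed

lemma level_max_partner:
  assumes "v \<in> level_max"
  shows "\<exists>u \<in> level_min. nbrs v = {u} \<and> nbrs u = {v}"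
proof -
  have v: "v \<in> level" "\<not> (\<forall>u \<in> V. E v u \<longrightarrow> v < u)"
    using assms unfolding level_max_def level_min_def by auto
  then obtain u where u: "u \<in> V" "E v u" "\<not> v < u" by blast
  have "u < v" using u irrefl by (cases "u = v") auto
  have "v \<in> V" using v(1) unfolding level_def by auto
  have nbrs_u: "nbrs u = {v}" and "u \<in> level" using level_nbr[OF v(1) u(1,2)] by auto
  have "nbrs v = {u}" using level_nbr[OF \<open>u \<in> level\<close> \<open>v \<in> V\<close>] u(2) sym by blast
  moreover have "u \<in> level_min"
    using nbrs_u \<open>u < v\<close> \<open>u \<in> level\<close> unfolding level_min_def by auto
  ultimately show ?thesis using nbrs_u by blast
qed

lemma card_level_max_le:
  shows "card level_max \<le> card level_min"
    and "card level_max = card level_min \<Longrightarrow> \<forall>v \<in> level. d v = 1"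
proof -
  define partner where "partner v = the_elem (nbrs v)" for v
  have partner: "partner v \<in> level_min" "nbrs v = {partner v}" "nbrs (partner v) = {v}"
    if "v \<in> level_max" for v
    using level_max_partner[OF that] unfolding partner_def by auto
  have into: "partner ` level_max \<subseteq> level_min" using partner(1) by blast
  have inj: "inj_on partner level_max" by (rule inj_onI) (metis partner(3) singleton_inject)
  have fin: "finite level_min" using finite_V unfolding level_min_def level_def by simp
  show "card level_max \<le> card level_min" using card_inj_on_le[OF inj into fin] .
  assume "card level_max = card level_min"
  hence onto: "partner ` level_max = level_min"
    using card_subset_eq[OF fin into] card_image[OF inj] by simp
  show "\<forall>v \<in> level. d v = 1"
  proof
    fix v assume "v \<in> level"
    show "d v = 1"
    proof (cases "v \<in> level_max")
      case True
      thus ?thesis using partner(2) by (simp add: deg_def)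
    next
      case False
      hence "v \<in> partner ` level_max" using onto \<open>v \<in> level\<close> unfolding level_max_def by blast
      thus ?thesis using partner(3) by (auto simp: deg_def)
    qed
  qed
qed

lemma deg_pos: "v \<in> low \<union> high \<Longrightarrow> 0 < d v"
  unfolding low_def high_def deg_def using finite_nbrs by (auto simp: card_gt_0_iff)

text \<open>Double counting of the low--high edges, each weighted by the reciprocal degree of its
  high end, resp.\ of its low end: all weights sum to one around a vertex, and the low end
  always carries the larger weight.\<close>

lemma card_high_less_card_low:
  assumes "low \<noteq> {}"
  shows "card high < card low"
proof -
  have fin: "finite low" "finite high" using finite_V unfolding low_def high_def by auto
  have low_nbrs: "{h \<in> high. E l h} = nbrs l" if "l \<in> low" for l
    using low_nbr[OF that] unfolding high_def by auto
  have high_nbrs: "{l \<in> low. E l h} = nbrs h" if "h \<in> high" for h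
    using high_nbr[OF that] sym unfolding low_def by auto
  have weight_sum: "(\<Sum>x \<in> nbrs v. 1 / real (d v)) = 1" if "v \<in> low \<union> high" for v
    using deg_pos[OF that] by (simp add: deg_def)
  have "real (card high) = (\<Sum>h \<in> high. 1)" by simp
  also have "\<dots> = (\<Sum>h \<in> high. \<Sum>l \<in> {l \<in> low. E l h}. 1 / real (d h))"
    by (rule sum.cong[OF refl]) (metis UnCI high_nbrs weight_sum)
  also have "\<dots> = (\<Sum>l \<in> low. \<Sum>h \<in> {h \<in> high. E l h}. 1 / real (d h))"
    by (rule sum.swap_restrict[OF fin, symmetric])
  also have "\<dots> < (\<Sum>l \<in> low. \<Sum>h \<in> {h \<in> high. E l h}. 1 / real (d l))"
  proof (rule sum_strict_mono[OF fin(1) assms])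
    fix l assume l: "l \<in> low"
    have "nbrs l \<noteq> {}" using l unfolding low_def by auto
    thus "(\<Sum>h \<in> {h \<in> high. E l h}. 1 / real (d h)) < (\<Sum>h \<in> {h \<in> high. E l h}. 1 / real (d l))"
      unfolding low_nbrs[OF l]
      using low_nbr[OF l] deg_pos l finite_nbrs by (intro sum_strict_mono) (auto simp: frac_less2)
  qed
  also have "\<dots> = (\<Sum>l \<in> low. 1)"
    by (rule sum.cong[OF refl]) (metis UnCI low_nbrs weight_sum)
  also have "\<dots> = real (card low)" by simp
  finally show ?thesis by simp
qed

lemma high_empty_if_low_empty:
  assumes "low = {}"
  shows "high = {}"
proof (rule equals0I)
  fix h assume h: "h \<in> high"
  then obtain u where "u \<in> V" "E h u" unfolding high_def by auto
  thus False using high_nbr[OF h] assms by blast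
qed

lemma card_partition: "card V = card low + card high + card level_min + card level_max"
proof -
  have fin: "finite low" "finite high" "finite level_min" "finite level_max"
    using finite_V unfolding low_def high_def level_min_def level_max_def level_def by auto
  have "V = low \<union> high \<union> level_min \<union> level_max"
    unfolding level_max_def level_min_def level_def low_def high_def by auto
  moreover have "card (low \<union> high) = card low + card high"
    using fin low_high_disjoint by (simp add: card_Un_disjoint)
  moreover have "card (low \<union> high \<union> level_min) = card (low \<union> high) + card level_min"
    using fin by (intro card_Un_disjoint) (auto simp: level_min_def level_def)
  moreover have "card (low \<union> high \<union> level_min \<union> level_max) =
      card (low \<union> high \<union> level_min) + card level_max"
    using fin by (intro card_Un_disjoint) (auto simp: level_max_def level_min_def level_def)
  ultimately show ?thesis by simp
qed

theorem large_independent_set: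
  "\<exists>X \<subseteq> V. independent_in E X \<and> card V \<le> 2 * card X \<and>
     (card V = 2 * card X \<longrightarrow> (\<forall>v \<in> V. d v = 1))"
proof (intro exI conjI impI)
  let ?X = "low \<union> level_min"
  show "?X \<subseteq> V" unfolding low_def level_min_def level_def by auto
  show "independent_in E ?X" by (rule independent_low_level_min)
  have "finite low" "finite level_min" "low \<inter> level_min = {}"
    using finite_V unfolding low_def level_min_def level_def by auto
  hence card_X: "card ?X = card low + card level_min" by (simp add: card_Un_disjoint)
  have high_le: "card high \<le> card low"
    using card_high_less_card_low high_empty_if_low_empty by (cases "low = {}") auto
  thus "card V \<le> 2 * card ?X" using card_partition card_X card_level_max_le(1) by linarith
  assume half: "card V = 2 * card ?X"
  have "low = {}"
  proof (rule ccontr)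
    assume "low \<noteq> {}"
    thus False
      using card_high_less_card_low[OF \<open>low \<noteq> {}\<close>] half card_partition card_X
        card_level_max_le(1)
      by linarith
  qed
  moreover have "card level_max = card level_min"
    using half high_le card_partition card_X card_level_max_le(1) by linarith
  ultimately show "\<forall>v \<in> V. d v = 1"
    using card_level_max_le(2) high_empty_if_low_empty unfolding level_def by auto
qed

lemma mp_complementary_ge:
  assumes "complementary V E E'" "3 \<le> m" "2 * (m - 1) \<le> card V"
  shows "m \<le> mp V E'"
proof -
  obtain X where X: "X \<subseteq> V" "independent_in E X" "card V \<le> 2 * card X"
    and matching: "card V = 2 * card X \<Longrightarrow> \<forall>v \<in> V. d v = 1"
    using large_independent_set by auto
  have "X \<noteq> {}" using X(3) assms(2,3) by auto
  show ?thesis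
  proof (cases "m \<le> card X")
    case True
    obtain p where p: "dm_path V E' p" "set p = X"
      using independent_dm_path_complementary[OF assms(1) finite_V X(1) \<open>X \<noteq> {}\<close> X(2)] by blast
    have "m \<le> length p" using True dm_path_length[OF p(1)] p(2) by simp
    thus ?thesis using dm_path_length_le_mp[OF finite_V p(1)] by linarith
  next
    case False
    hence card_X: "card X = m - 1" "card V = 2 * card X" using X(3) assms(3) by linarith+
    hence "2 \<le> card (V - X)"
      using X(1) assms(2) finite_V by (simp add: card_Diff_subset finite_subset)
    then obtain p where p: "dm_path V E' p" "length p = card X + 1"
      using perfect_matching_complementary_dm_path[OF assms(1) finite_V irrefl
          matching[OF card_X(2)] X(1) \<open>X \<noteq> {}\<close> X(2)] by blast
    thus ?thesis using card_X assms(2) dm_path_length_le_mp[OF finite_V p(1)] by linarith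
  qed
qed

end

section \<open>Two-colourings of complete graphs\<close>

lemma colour_graph_sym: "colour_graph col j u v \<Longrightarrow> colour_graph col j v u"
  unfolding colour_graph_def by (auto simp: insert_commute)

lemma colour_graph_irrefl: "\<not> colour_graph col j v v"
  unfolding colour_graph_def by simp

lemma complementary_colour_graphs:
  assumes "two_colouring n col"
  shows "complementary {..<n} (colour_graph col 1) (colour_graph col 2)"
proof -
  have "col {u, v} \<in> {1, 2}" if "u < n" "v < n" "u \<noteq> v" for u v
    using assms that unfolding two_colouring_def by auto
  thus ?thesis unfolding complementary_def colour_graph_def by auto
qed

theorem arrows_upper_bound:
  assumes "3 \<le> m"
  shows "arrows 3 m (2 * (m - 1))"
  unfolding arrows_def
proof (intro allI impI)
  fix n col assume n: "2 * (m - 1) \<le> n" and col: "two_colouring n col"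
  show "3 \<le> mp {..<n} (colour_graph col 1) \<or> m \<le> mp {..<n} (colour_graph col 2)"
  proof (cases "mp {..<n} (colour_graph col 1) < 3")
    case True
    interpret dm3_free_graph "{..<n}" "colour_graph col 1"
    proof unfold_locales
      fix u v assume "colour_graph col 1 u v"
      thus "colour_graph col 1 v u" by (rule colour_graph_sym)
    qed (use True colour_graph_irrefl in auto)
    have "m \<le> mp {..<n} (colour_graph col 2)"
      using mp_complementary_ge[OF complementary_colour_graphs[OF col] assms] n by simp
    thus ?thesis ..
  qed simp
qed

definition cut_colouring :: "nat \<Rightarrow> nat set \<Rightarrow> nat" where
  "cut_colouring k e = (if \<exists>u \<in> e. \<exists>v \<in> e. u < k \<and> k \<le> v then 1 else 2)"

lemma two_colouring_cut_colouring: "two_colouring n (cut_colouring k)"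
  unfolding two_colouring_def cut_colouring_def by simp

lemma colour_graph_cut_colouring:
  "colour_graph (cut_colouring k) 1 u v \<longleftrightarrow> (u < k) \<noteq> (v < k)"
  "colour_graph (cut_colouring k) 2 u v \<longleftrightarrow> u \<noteq> v \<and> (u < k) = (v < k)"
  unfolding colour_graph_def cut_colouring_def by auto

lemma deg_cut_colouring:
  assumes "k \<le> n" "u < n"
  shows "deg {..<n} (colour_graph (cut_colouring k) 1) u = (if u < k then n - k else k)"
proof -
  have "{w \<in> {..<n}. colour_graph (cut_colouring k) 1 u w} = (if u < k then {k..<n} else {..<k})"
    using assms unfolding colour_graph_cut_colouring(1) by auto
  thus ?thesis by (simp add: deg_def)
qed

lemma mp_cut_colouring_1:
  assumes "k \<le> n" "2 * k \<noteq> n"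
  shows "mp {..<n} (colour_graph (cut_colouring k) 1) \<le> 2"
proof (rule mp_le)
  let ?G = "colour_graph (cut_colouring k) 1"
  fix p assume p: "dm_path {..<n} ?G p"
  have step: "(p ! i < k) \<noteq> (p ! Suc i < k) \<and> deg {..<n} ?G (p ! i) \<le> deg {..<n} ?G (p ! Suc i)"
    if "Suc i < length p" for i
    using p that unfolding dm_path_def colour_graph_cut_colouring(1) by blast
  have "p ! i < n" if "i < length p" for i
    using p nth_mem[OF that] unfolding dm_path_def by blast
  hence deg: "deg {..<n} ?G (p ! i) = (if p ! i < k then n - k else k)" if "i < length p" for i
    using deg_cut_colouring[OF assms(1)] that by blast
  show "length p \<le> 2"
  proof (rule ccontr)
    assume "\<not> length p \<le> 2"
    hence len: "Suc 0 < length p" "Suc (Suc 0) < length p" by auto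
    have "n - k \<noteq> k" using assms by linarith
    moreover have "0 < length p" using Suc_lessD[OF len(1)] .
    ultimately have "deg {..<n} ?G (p ! 0) = deg {..<n} ?G (p ! Suc (Suc 0))"
      "deg {..<n} ?G (p ! 0) \<noteq> deg {..<n} ?G (p ! Suc 0)"
      using step[OF len(1)] step[OF len(2)] deg len by auto
    thus False using step[OF len(1)] step[OF len(2)] by linarith
  qed
qed simp

lemma mp_cut_colouring_2: "mp {..<n} (colour_graph (cut_colouring k) 2) \<le> max k (n - k)"
proof (rule mp_le)
  fix p assume p: "dm_path {..<n} (colour_graph (cut_colouring k) 2) p"
  have side: "x < k \<longleftrightarrow> hd p < k" if "x \<in> set p" for x
    by (rule dm_path_preserves[OF p _ that]) (simp add: colour_graph_cut_colouring(2))
  have "set p \<subseteq> {..<n}" using p unfolding dm_path_def by blast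
  hence "set p \<subseteq> (if hd p < k then {..<k} else {k..<n})"
    using side by (auto simp: subset_iff not_less)
  hence "card (set p) \<le> (if hd p < k then k else n - k)"
    by (metis card_atLeastLessThan card_lessThan card_mono finite_atLeastLessThan finite_lessThan)
  thus "length p \<le> max k (n - k)" using dm_path_length[OF p] by (simp split: if_splits)
qed simp

theorem not_arrows_lower_bound:
  assumes "3 \<le> m" "M \<le> 2 * m - 3"
  shows "\<not> arrows 3 m M"
proof
  assume "arrows 3 m M"
  hence "3 \<le> mp {..<2 * m - 3} (colour_graph (cut_colouring (m - 1)) 1) \<or>
         m \<le> mp {..<2 * m - 3} (colour_graph (cut_colouring (m - 1)) 2)"
    using assms(2) two_colouring_cut_colouring unfolding arrows_def by blast
  moreover have "mp {..<2 * m - 3} (colour_graph (cut_colouring (m - 1)) 1) \<le> 2"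
    using assms(1) by (intro mp_cut_colouring_1) auto
  moreover have "mp {..<2 * m - 3} (colour_graph (cut_colouring (m - 1)) 2) \<le> m - 1"
    using mp_cut_colouring_2[of "2 * m - 3" "m - 1"] assms(1) by simp
  ultimately show False using assms(1) by linarith
qed

theorem theorem1p4:
  fixes m :: nat
  assumes "m \<ge> 3"
  shows "M_num 3 m = 2 * (m - 1)"
  unfolding M_num_def
proof (rule Least_equality)
  show "arrows 3 m (2 * (m - 1))" using arrows_upper_bound[OF assms] .
  fix M assume "arrows 3 m M"
  thus "2 * (m - 1) \<le> M" using not_arrows_lower_bound[OF assms, of M] by linarith
qed

end
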